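(* Let $\alpha,\beta$ be real constants with $\alpha+2\beta=1$ and $\beta\le 2/3$, and let $A,B>0$. There exist constants $C_1>0$ and $c>0$ (depending only on $\alpha,\beta,A,B$) such that the following holds. Let $m,n$ be positive integers with $m\le n^2/C_1$ and $n\le m^2/C_1$, and let $P$ be a finite set of points and $L$ a finite set of lines in $\mathbb{R}^2$ with $|L|\le A\,m^{\alpha}n^{\beta}$ and $|I(P,L)|\ge B\,m^{\alpha-\frac13}n^{\beta+\frac23}$. Then $|P|\ge c\,m^{\frac12\alpha-\frac12}n^{\frac12\beta+1}$.
   Context: $I(P,L)$ denotes the set of incidences between $P$ and $L$, i.e. pairs $(p,\ell)\in P\times L$ with $p\in\ell$. *)

theory Defs
  imports Complex_Main
begin

definition is_line :: "(real \<times> real) set \<Rightarrow> bool" where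
  "is_line l \<longleftrightarrow> (\<exists>a b c. (a, b) \<noteq> (0, 0) \<and> l = {(x, y). a * x + b * y = c})"

definition incidences :: "(real \<times> real) set \<Rightarrow> (real \<times> real) set set \<Rightarrow> ((real \<times> real) \<times> (real \<times> real) set) set" where
  "incidences P L = {(p, l). p \<in> P \<and> l \<in> L \<and> p \<in> l}"

end

theory Submission
  imports Defs
begin

text \<open>The bound on \<open>|P|\<close> is the Szemeredi--Trotter inequality
  \<open>I(P, L) \<le> |L| + 8 |P| + (128 |P|\<^sup>2 |L|\<^sup>2)\<^bsup>1/3\<^esup>\<close> solved for \<open>|P|\<close>: under the hypotheses on
  \<open>m\<close> and \<open>n\<close> the term \<open>|L|\<close> is at most a quarter of the assumed number of incidences, and each of
  the two remaining terms forces \<open>|P| \<ge> c m\<^bsup>\<alpha>/2 - 1/2\<^esup> n\<^bsup>\<beta>/2 + 1\<^esup>\<close>.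

  Szemeredi--Trotter is proved with Szekely's crossing-number argument. After a generic shear all
  points have distinct abscissae; joining consecutive points of \<open>P\<close> on each line gives a
  straight-line drawing with at least \<open>I(P, L) - |L|\<close> edges and at most \<open>|L|\<^sup>2\<close> crossing
  pairs. A crossing-free drawing has at most \<open>4 |V|\<close> edges: every pair of edges entering a vertex
  consecutively in slope order is charged, injectively, to the rightmost vertex of the wedge
  between them together with one of three tags. Deleting one edge per crossing and sampling the
  vertices at random then gives the crossing lemma \<open>|E|\<^sup>3 \<le> 128 |V|\<^sup>2 cr\<close> for \<open>|E| \<ge> 8 |V|\<close>.\<close>

section \<open>Consecutive pairs and random subsets\<close>

definition consecutive_pairs :: "('a \<Rightarrow> 'b::linorder) \<Rightarrow> 'a set \<Rightarrow> ('a \<times> 'a) set" where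
  "consecutive_pairs f S =
     {(a, b). a \<in> S \<and> b \<in> S \<and> f a < f b \<and> \<not> (\<exists>c\<in>S. f a < f c \<and> f c < f b)}"

lemma consecutive_pairs_subset: "consecutive_pairs f S \<subseteq> S \<times> S"
  by (auto simp: consecutive_pairs_def)

lemma finite_consecutive_pairs: "finite S \<Longrightarrow> finite (consecutive_pairs f S)"
  by (rule finite_subset[OF consecutive_pairs_subset]) simp

lemma consecutive_pairs_unique_snd:
  assumes "inj_on f S" "(a, b) \<in> consecutive_pairs f S" "(a, b') \<in> consecutive_pairs f S"
  shows "b = b'"
proof -
  have "\<not> f b < f b'" "\<not> f b' < f b"
    using assms(2,3) unfolding consecutive_pairs_def by auto
  then have "f b = f b'" by simp
  then show ?thesis using assms unfolding consecutive_pairs_def inj_on_def by blast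
qed

lemma consecutive_pairs_unique_fst:
  assumes "inj_on f S" "(a, b) \<in> consecutive_pairs f S" "(a', b) \<in> consecutive_pairs f S"
  shows "a = a'"
proof -
  have "\<not> f a < f a'" "\<not> f a' < f a"
    using assms(2,3) unfolding consecutive_pairs_def by auto
  then have "f a = f a'" by simp
  then show ?thesis using assms unfolding consecutive_pairs_def inj_on_def by blast
qed

lemma card_le_Suc_card_consecutive_pairs:
  assumes "finite S" "inj_on f S"
  shows "card S \<le> card (consecutive_pairs f S) + 1"
  using assms
proof (induction S rule: finite_ranking_induct[where f = f])
  case empty
  then show ?case by simp
next
  case (insert x S)
  have IH: "card S \<le> card (consecutive_pairs f S) + 1"
    using insert.IH insert.prems by (meson inj_on_subset subset_insertI)
  show ?case
  proof (cases "x \<in> S \<or> S = {}")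
    case True
    then show ?thesis using IH by (auto simp: insert_absorb)
  next
    case False
    have below: "f y < f x" if "y \<in> S" for y
    proof -
      have "f y \<noteq> f x"
        using inj_on_eq_iff[OF insert.prems, of y x] that False by auto
      then show ?thesis using insert.hyps(2)[OF that] by simp
    qed
    have "Max (f ` S) \<in> f ` S"
      using False insert.hyps(1) by simp
    then obtain y where y: "y \<in> S" "f y = Max (f ` S)"
      by (metis imageE)
    have y_max: "f c \<le> f y" if "c \<in> S" for c
      using y(2) Max_ge[of "f ` S" "f c"] insert.hyps(1) that by simp
    have "(y, x) \<in> consecutive_pairs f (insert x S)"
      using y(1) below y_max unfolding consecutive_pairs_def by (auto simp: not_less)
    moreover have "consecutive_pairs f S \<subseteq> consecutive_pairs f (insert x S)"
      unfolding consecutive_pairs_def by (auto simp: not_less dest: below)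
    moreover have "(y, x) \<notin> consecutive_pairs f S"
      using False unfolding consecutive_pairs_def by auto
    ultimately have "card (consecutive_pairs f S) + 1 \<le> card (consecutive_pairs f (insert x S))"
      using insert.hyps(1)
      by (metis Suc_eq_plus1 card_insert_disjoint card_mono finite.insertI finite_consecutive_pairs
          insert_subsetI)
    then show ?thesis using IH False insert.hyps(1) by simp
  qed
qed

lemma arg_max_on_finite:
  fixes f :: "'a \<Rightarrow> 'b::linorder"
  assumes "finite S" "S \<noteq> {}"
  shows "arg_max_on f S \<in> S" "\<And>q. q \<in> S \<Longrightarrow> f q \<le> f (arg_max_on f S)"
proof -
  have "Max (f ` S) \<in> f ` S" using assms by simp
  then obtain k where k: "k \<in> S" "f k = Max (f ` S)" by (metis imageE)
  have "is_arg_max f (\<lambda>x. x \<in> S) k"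
    using k assms(1) by (simp add: is_arg_max_linorder)
  then have "is_arg_max f (\<lambda>x. x \<in> S) (arg_max_on f S)"
    unfolding arg_max_on_def arg_max_def by (rule someI)
  then show "arg_max_on f S \<in> S" "\<And>q. q \<in> S \<Longrightarrow> f q \<le> f (arg_max_on f S)"
    by (auto simp: is_arg_max_linorder)
qed

text \<open>The probability that a random subset of \<open>V\<close>, containing each element independently
  with probability \<open>p\<close>, equals \<open>S\<close>.\<close>
definition random_subset_weight :: "'a::comm_ring_1 \<Rightarrow> 'b set \<Rightarrow> 'b set \<Rightarrow> 'a" where
  "random_subset_weight p V S = p ^ card S * (1 - p) ^ card (V - S)"

lemma sum_random_subset_weight_superset:
  fixes p :: "'a::comm_ring_1"
  assumes "finite V" "A \<subseteq> V"
  shows "(\<Sum>S\<in>Pow V. if A \<subseteq> S then random_subset_weight p V S else 0) = p ^ card A"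
proof -
  define g where "g i = (if i \<in> A then 0 else 1 - p)" for i
  have "(\<Sum>S\<in>Pow V. if A \<subseteq> S then random_subset_weight p V S else 0)
      = (\<Sum>S\<in>Pow V. (\<Prod>i\<in>S. p) * (\<Prod>i\<in>V - S. g i))"
  proof (rule sum.cong[OF refl])
    fix S assume "S \<in> Pow V"
    show "(if A \<subseteq> S then random_subset_weight p V S else 0) = (\<Prod>i\<in>S. p) * (\<Prod>i\<in>V - S. g i)"
    proof (cases "A \<subseteq> S")
      case True
      then have "(\<Prod>i\<in>V - S. g i) = (\<Prod>i\<in>V - S. 1 - p)" by (intro prod.cong) (auto simp: g_def)
      then show ?thesis using True by (simp add: random_subset_weight_def)
    next
      case False
      then obtain i where "i \<in> A" "i \<notin> S" by blast
      then have "i \<in> V - S" "g i = 0" using assms(2) by (auto simp: g_def)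
      then have "(\<Prod>i\<in>V - S. g i) = 0" using assms(1) by (meson finite_Diff prod_zero)
      then show ?thesis using False by simp
    qed
  qed
  also have "\<dots> = (\<Prod>i\<in>V. p + g i)"
    by (rule prod_add[OF assms(1), symmetric])
  also have "\<dots> = (\<Prod>i\<in>V. if i \<in> A then p else 1)"
    by (rule prod.cong) (auto simp: g_def)
  also have "\<dots> = p ^ card A"
    using assms by (simp add: prod.If_cases Int_absorb1)
  finally show ?thesis .
qed

lemma sum_random_subset_weight_count:
  fixes p :: "'a::comm_ring_1"
  assumes "finite V" "finite I" "\<And>i. i \<in> I \<Longrightarrow> B i \<subseteq> V"
  shows "(\<Sum>S\<in>Pow V. random_subset_weight p V S * of_nat (card {i\<in>I. B i \<subseteq> S}))
       = (\<Sum>i\<in>I. p ^ card (B i))"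
proof -
  have "(\<Sum>S\<in>Pow V. random_subset_weight p V S * of_nat (card {i\<in>I. B i \<subseteq> S}))
      = (\<Sum>S\<in>Pow V. \<Sum>i\<in>I. if B i \<subseteq> S then random_subset_weight p V S else 0)"
    using assms(2) by (simp add: sum.inter_filter[symmetric] mult.commute)
  also have "\<dots> = (\<Sum>i\<in>I. \<Sum>S\<in>Pow V. if B i \<subseteq> S then random_subset_weight p V S else 0)"
    by (rule sum.swap)
  also have "\<dots> = (\<Sum>i\<in>I. p ^ card (B i))"
    by (rule sum.cong[OF refl]) (rule sum_random_subset_weight_superset[OF assms(1,3)])
  finally show ?thesis .
qed

section \<open>Straight-line drawings with distinct abscissae\<close>

type_synonym point = "real \<times> real"

text \<open>A segment is stored as the pair (left endpoint, right endpoint).\<close>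
type_synonym segment = "point \<times> point"

definition slope :: "segment \<Rightarrow> real" where
  "slope e = (snd (snd e) - snd (fst e)) / (fst (snd e) - fst (fst e))"

definition height_at :: "segment \<Rightarrow> real \<Rightarrow> real" where
  "height_at e x = snd (fst e) + (x - fst (fst e)) * slope e"

definition spans :: "segment \<Rightarrow> real \<Rightarrow> bool" where
  "spans e x \<longleftrightarrow> fst (fst e) \<le> x \<and> x \<le> fst (snd e)"

definition crosses :: "segment \<Rightarrow> segment \<Rightarrow> bool" where
  "crosses e f \<longleftrightarrow> (\<exists>x. spans e x \<and> spans f x \<and> height_at e x = height_at f x \<and>
      (x, height_at e x) \<notin> {fst e, snd e} \<inter> {fst f, snd f})"

text \<open>\<open>f\<close> runs strictly below \<open>e\<close> immediately to the right of \<open>X\<close>.\<close>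
definition below_right_of :: "real \<Rightarrow> segment \<Rightarrow> segment \<Rightarrow> bool" where
  "below_right_of X f e \<longleftrightarrow>
     height_at f X < height_at e X \<or> (height_at f X = height_at e X \<and> slope f < slope e)"

lemma height_at_left: "height_at e (fst (fst e)) = snd (fst e)"
  by (simp add: height_at_def)

lemma height_at_right: "fst (fst e) \<noteq> fst (snd e) \<Longrightarrow> height_at e (fst (snd e)) = snd (snd e)"
  by (simp add: height_at_def slope_def)

lemma height_at_from_right:
  "fst (fst e) \<noteq> fst (snd e) \<Longrightarrow> height_at e x = snd (snd e) + (x - fst (snd e)) * slope e"
  by (simp add: height_at_def slope_def field_simps)

lemma height_at_diff: "height_at e y - height_at e x = (y - x) * slope e"
  by (simp add: height_at_def algebra_simps)

locale segment_graph =
  fixes V :: "point set" and E :: "segment set"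
  assumes finite_V: "finite V"
    and inj_on_fst_V: "inj_on fst V"
    and edges_subset: "E \<subseteq> V \<times> V"
    and left_lt_right: "e \<in> E \<Longrightarrow> fst (fst e) < fst (snd e)"
    and vertex_off_edge: "p \<in> V \<Longrightarrow> e \<in> E \<Longrightarrow> fst (fst e) < fst p \<Longrightarrow> fst p < fst (snd e) \<Longrightarrow>
      snd p \<noteq> height_at e (fst p)"
begin

lemma finite_E: "finite E"
  using finite_subset[OF edges_subset] finite_V by auto

lemma endpoints_in_V: "e \<in> E \<Longrightarrow> fst e \<in> V" "e \<in> E \<Longrightarrow> snd e \<in> V"
  using edges_subset by auto

lemma vertex_eqI: "p \<in> V \<Longrightarrow> q \<in> V \<Longrightarrow> fst p = fst q \<Longrightarrow> p = q"
  using inj_on_fst_V by (auto simp: inj_on_def)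

definition crossing_pairs :: "(segment \<times> segment) set" where
  "crossing_pairs = {(e, f). e \<in> E \<and> f \<in> E \<and> e \<noteq> f \<and> crosses e f}"

lemma finite_crossing_pairs: "finite crossing_pairs"
  by (rule finite_subset[of _ "E \<times> E"]) (auto simp: crossing_pairs_def finite_E)

definition in_edges :: "point \<Rightarrow> segment set" where
  "in_edges w = {e \<in> E. snd e = w}"

definition wedges :: "(segment \<times> segment) set" where
  "wedges = (\<Union>w\<in>V. consecutive_pairs slope (in_edges w))"

definition wedge_region :: "segment \<Rightarrow> segment \<Rightarrow> point set" where
  "wedge_region e1 e2 = {p \<in> V. fst (fst e1) \<le> fst p \<and> fst (fst e2) \<le> fst p \<and> fst p < fst (snd e1) \<and>
     height_at e2 (fst p) \<le> snd p \<and> snd p \<le> height_at e1 (fst p)}"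

definition wedge_witness :: "segment \<Rightarrow> segment \<Rightarrow> point" where
  "wedge_witness e1 e2 = arg_max_on fst (wedge_region e1 e2)"

definition witness_tag :: "segment \<Rightarrow> segment \<Rightarrow> nat" where
  "witness_tag e1 e2 =
     (if wedge_witness e1 e2 = fst e1 then 0 else if wedge_witness e1 e2 = fst e2 then 1 else 2)"

lemma wedgesD:
  assumes "(e1, e2) \<in> wedges"
  shows "e1 \<in> E" "e2 \<in> E" "snd e1 = snd e2" "slope e1 < slope e2"
    "\<And>f. f \<in> E \<Longrightarrow> snd f = snd e1 \<Longrightarrow> slope e1 < slope f \<Longrightarrow> slope f < slope e2 \<Longrightarrow> False"
proof -
  obtain w where "(e1, e2) \<in> consecutive_pairs slope (in_edges w)"
    using assms unfolding wedges_def by blast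
  then show "e1 \<in> E" "e2 \<in> E" "snd e1 = snd e2" "slope e1 < slope e2"
    "\<And>f. f \<in> E \<Longrightarrow> snd f = snd e1 \<Longrightarrow> slope e1 < slope f \<Longrightarrow> slope f < slope e2 \<Longrightarrow> False"
    unfolding consecutive_pairs_def in_edges_def by auto
qed

end

locale plane_segment_graph = segment_graph +
  assumes no_crossing: "e \<in> E \<Longrightarrow> f \<in> E \<Longrightarrow> e \<noteq> f \<Longrightarrow> \<not> crosses e f"
begin

lemma height_at_neq:
  assumes "e \<in> E" "f \<in> E" "e \<noteq> f" "fst (fst e) < x" "x < fst (snd e)" "spans f x"
  shows "height_at e x \<noteq> height_at f x"
proof
  assume "height_at e x = height_at f x"
  moreover have "(x, height_at e x) \<notin> {fst e, snd e}"
  proof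
    assume "(x, height_at e x) \<in> {fst e, snd e}"
    then have "x \<in> {fst (fst e), fst (snd e)}" by (auto simp: prod_eq_iff)
    then show False using assms(4,5) by auto
  qed
  ultimately have "crosses e f"
    unfolding crosses_def using assms by (intro exI[of _ x]) (auto simp: spans_def)
  then show False using no_crossing assms(1-3) by blast
qed

text \<open>The vertical gap between two edges is affine; a change of sign would put a crossing at
  its zero.\<close>
lemma stays_below:
  assumes "e \<in> E" "f \<in> E" "e \<noteq> f" "X \<le> Y" "spans e X" "spans f X" "spans e Y" "spans f Y"
    "below_right_of X f e"
  shows "height_at f Y \<le> height_at e Y"
proof (rule ccontr)
  assume "\<not> ?thesis"
  then have below_Y: "height_at e Y - height_at f Y < 0" by simp
  define d where "d = height_at e X - height_at f X"
  have gap: "height_at e t - height_at f t = d + (t - X) * (slope e - slope f)" for t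
    using height_at_diff[of e t X] height_at_diff[of f t X] unfolding d_def by (simp add: algebra_simps)
  have "d > 0"
  proof (rule ccontr)
    assume "\<not> d > 0"
    then have "d = 0" "slope f < slope e"
      using assms(9) unfolding d_def below_right_of_def by auto
    moreover have "(Y - X) * (slope e - slope f) \<ge> 0"
      using assms(4) \<open>slope f < slope e\<close> by simp
    ultimately show False using below_Y gap[of Y] by simp
  qed
  have "X < Y" using below_Y gap[of Y] \<open>d > 0\<close> assms(4) by (cases "X = Y") auto
  have steeper: "slope e - slope f < 0"
  proof (rule ccontr)
    assume "\<not> ?thesis"
    then have "(Y - X) * (slope e - slope f) \<ge> 0" using \<open>X < Y\<close> by simp
    then show False using below_Y gap[of Y] \<open>d > 0\<close> by simp
  qed
  define z where "z = X + d / (slope f - slope e)"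
  have "X < z" unfolding z_def using \<open>d > 0\<close> steeper by simp
  have "d < (Y - X) * (slope f - slope e)" using below_Y gap[of Y] by (simp add: algebra_simps)
  then have "d / (slope f - slope e) < Y - X"
    using steeper by (simp add: pos_divide_less_eq)
  then have "z < Y" unfolding z_def by simp
  have "height_at e z - height_at f z = 0"
    using gap[of z] steeper unfolding z_def by (simp add: field_simps)
  moreover have "height_at e z \<noteq> height_at f z"
    using assms \<open>X < z\<close> \<open>z < Y\<close> by (intro height_at_neq) (auto simp: spans_def)
  ultimately show False by simp
qed

lemma same_right_end_slope_inj:
  assumes "e \<in> E" "f \<in> E" "snd e = snd f" "slope e = slope f"
  shows "e = f"
proof (rule ccontr)
  assume ne: "e \<noteq> f"
  define x where "x = max (fst (fst e)) (fst (fst f))"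
  have e: "fst (fst e) < fst (snd e)" and f: "fst (fst f) < fst (snd f)"
    using left_lt_right assms(1,2) by auto
  have meet: "height_at e x = height_at f x"
    using height_at_from_right[of e x] height_at_from_right[of f x] e f assms(3,4) by simp
  consider "fst (fst e) < x" | "fst (fst f) < x" | "fst (fst e) = fst (fst f)"
    unfolding x_def by linarith
  then show False
  proof cases
    case 1
    then show False using height_at_neq[OF assms(1,2) ne 1] meet e f assms(3) by (auto simp: spans_def x_def)
  next
    case 2
    then show False using height_at_neq[OF assms(2,1) ne[symmetric] 2] meet e f assms(3) by (auto simp: spans_def x_def)
  next
    case 3
    then have "fst e = fst f" using vertex_eqI endpoints_in_V assms(1,2) by blast
    then show False using ne assms(3) by (simp add: prod_eq_iff)
  qed
qed

lemma same_left_end_slope_inj: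
  assumes "e \<in> E" "f \<in> E" "fst e = fst f" "slope e = slope f"
  shows "e = f"
proof (rule ccontr)
  assume ne: "e \<noteq> f"
  define x where "x = min (fst (snd e)) (fst (snd f))"
  have e: "fst (fst e) < fst (snd e)" and f: "fst (fst f) < fst (snd f)"
    using left_lt_right assms(1,2) by auto
  have meet: "height_at e x = height_at f x"
    using assms(3,4) by (simp add: height_at_def)
  consider "x < fst (snd e)" | "x < fst (snd f)" | "fst (snd e) = fst (snd f)"
    unfolding x_def by linarith
  then show False
  proof cases
    case 1
    then show False using height_at_neq[OF assms(1,2) ne _ 1] meet e f assms(3) by (auto simp: spans_def x_def)
  next
    case 2
    then show False using height_at_neq[OF assms(2,1) ne[symmetric] _ 2] meet e f assms(3) by (auto simp: spans_def x_def)
  next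
    case 3
    then have "snd e = snd f" using vertex_eqI endpoints_in_V assms(1,2) by blast
    then show False using ne assms(3) by (simp add: prod_eq_iff)
  qed
qed

lemma inj_on_slope_in_edges: "inj_on slope (in_edges w)"
  using same_right_end_slope_inj unfolding in_edges_def inj_on_def by auto

lemma wedge_upper_above:
  assumes "(e1, e2) \<in> wedges" "x < fst (snd e1)"
  shows "height_at e2 x < height_at e1 x"
proof -
  note w = wedgesD[OF assms(1)]
  have "height_at e1 x - height_at e2 x = (x - fst (snd e1)) * (slope e1 - slope e2)"
    using height_at_from_right[of e1 x] height_at_from_right[of e2 x] left_lt_right[OF w(1)]
      left_lt_right[OF w(2)] w(3)
    by (simp add: algebra_simps)
  moreover have "(x - fst (snd e1)) * (slope e1 - slope e2) > 0"
    using assms(2) w(4) by (simp add: mult_neg_neg)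
  ultimately show ?thesis by simp
qed

lemma wedge_witness:
  assumes "(e1, e2) \<in> wedges"
  shows "wedge_witness e1 e2 \<in> wedge_region e1 e2"
    and "\<And>q. q \<in> wedge_region e1 e2 \<Longrightarrow> fst q \<le> fst (wedge_witness e1 e2)"
proof -
  note w = wedgesD[OF assms]
  have e1: "fst (fst e1) < fst (snd e1)" and e2: "fst (fst e2) < fst (snd e2)"
    using left_lt_right w(1,2) by auto
  have "fst e1 \<in> wedge_region e1 e2 \<or> fst e2 \<in> wedge_region e1 e2"
  proof (cases "fst (fst e2) \<le> fst (fst e1)")
    case True
    then have "fst e1 \<in> wedge_region e1 e2"
      using wedge_upper_above[OF assms, of "fst (fst e1)"] e1 endpoints_in_V[OF w(1)]
      unfolding wedge_region_def by (auto simp: height_at_left)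
    then show ?thesis ..
  next
    case False
    then have "fst e2 \<in> wedge_region e1 e2"
      using wedge_upper_above[OF assms, of "fst (fst e2)"] e2 w(3) endpoints_in_V[OF w(2)]
      unfolding wedge_region_def by (auto simp: height_at_left)
    then show ?thesis ..
  qed
  then have "wedge_region e1 e2 \<noteq> {}" by blast
  moreover have "finite (wedge_region e1 e2)"
    using finite_V unfolding wedge_region_def by auto
  ultimately show "wedge_witness e1 e2 \<in> wedge_region e1 e2"
    and "\<And>q. q \<in> wedge_region e1 e2 \<Longrightarrow> fst q \<le> fst (wedge_witness e1 e2)"
    unfolding wedge_witness_def by (blast intro: arg_max_on_finite)+
qed

text \<open>An edge entering the wedge at \<open>X\<close> cannot cross out of it, and cannot end at the apex
  (its slope would lie strictly between those of two consecutive edges), so it ends at a vertex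
  of the wedge region to the right of \<open>X\<close>.\<close>
lemma wedge_region_beyond_edge:
  assumes wedge: "(e1, e2) \<in> wedges"
    and f: "f \<in> E" "f \<noteq> e1" "f \<noteq> e2" "fst (fst f) \<le> X" "X < fst (snd f)"
    and X: "fst (fst e1) \<le> X" "fst (fst e2) \<le> X" "X < fst (snd e1)"
    and inside: "below_right_of X f e1" "below_right_of X e2 f"
  shows "\<exists>r\<in>wedge_region e1 e2. X < fst r"
proof -
  note w = wedgesD[OF wedge]
  define apex where "apex = snd e1"
  define Y where "Y = min (fst (snd f)) (fst apex)"
  have e1: "fst (fst e1) < fst (snd e1)" and e2: "fst (fst e2) < fst (snd e2)"
    and f_lr: "fst (fst f) < fst (snd f)"
    using left_lt_right w(1,2) f(1) by auto
  have upper: "height_at f Y \<le> height_at e1 Y"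
    using f X inside w(3) by (intro stays_below[OF w(1) f(1) f(2)[symmetric]]) (auto simp: Y_def apex_def spans_def)
  have lower: "height_at e2 Y \<le> height_at f Y"
    using f X inside w(3) by (intro stays_below[OF f(1) w(2) f(3)]) (auto simp: Y_def apex_def spans_def)
  show ?thesis
  proof (cases "fst (snd f) < fst apex")
    case True
    then have "Y = fst (snd f)" unfolding Y_def by simp
    then have "snd f \<in> wedge_region e1 e2"
      using upper lower True X f f_lr endpoints_in_V[OF f(1)] height_at_right[of f]
      unfolding wedge_region_def by (auto simp: apex_def)
    then show ?thesis using f by auto
  next
    case False
    then have Y: "Y = fst apex" unfolding Y_def by simp
    have apex_V: "apex \<in> V" using endpoints_in_V w(1) apex_def by auto
    have "height_at f (fst apex) = snd apex"
      using upper lower Y height_at_right[of e1] height_at_right[of e2] e1 e2 w(3)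
      by (simp add: apex_def)
    then have "fst apex = fst (snd f)"
      using vertex_off_edge[OF apex_V f(1)] False f X by (force simp: apex_def)
    then have f_apex: "snd f = apex" using vertex_eqI apex_V endpoints_in_V f(1) by metis
    have left: "X - fst apex < 0" using X apex_def by simp
    have "height_at e1 X - height_at f X = (X - fst apex) * (slope e1 - slope f)"
      and "height_at f X - height_at e2 X = (X - fst apex) * (slope f - slope e2)"
      using height_at_from_right[of e1 X] height_at_from_right[of e2 X] height_at_from_right[of f X]
        e1 e2 f_lr f_apex w(3)
      by (simp_all add: apex_def algebra_simps)
    then have "0 < (X - fst apex) * (slope e1 - slope f) \<or> slope f < slope e1 \<and> (X - fst apex) * (slope e1 - slope f) = 0"
      and "0 < (X - fst apex) * (slope f - slope e2) \<or> slope e2 < slope f \<and> (X - fst apex) * (slope f - slope e2) = 0"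
      using inside unfolding below_right_of_def by auto
    then have "slope e1 < slope f" "slope f < slope e2"
      using left by (auto simp: zero_less_mult_iff)
    then show ?thesis using w(5)[OF f(1)] f_apex apex_def by simp
  qed
qed

lemma wedge_witness_upper_start:
  assumes wedge: "(e1, e2) \<in> wedges" and v: "wedge_witness e1 e2 = fst e1"
    and f: "f \<in> E" "fst f = fst e1"
  shows "slope e1 \<le> slope f"
proof (rule ccontr)
  assume "\<not> ?thesis"
  then have steeper: "slope f < slope e1" by simp
  note w = wedgesD[OF wedge]
  define X where "X = fst (fst e1)"
  have X: "fst (fst e1) \<le> X" "fst (fst e2) \<le> X" "X < fst (snd e1)"
    using wedge_witness(1)[OF wedge] v unfolding wedge_region_def X_def by auto
  have "f \<noteq> e2" using f w(3) wedgesD(4)[OF wedge] by (metis less_irrefl prod.expand)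
  moreover have "height_at f X = height_at e1 X"
    using f(2) unfolding X_def height_at_def by simp
  ultimately obtain r where "r \<in> wedge_region e1 e2" "X < fst r"
    using wedge_region_beyond_edge[OF wedge f(1) _ _ _ _ X] steeper wedge_upper_above[OF wedge X(3)]
      left_lt_right[OF f(1)] f(2)
    unfolding below_right_of_def X_def by fastforce
  moreover have "fst r \<le> X" if "r \<in> wedge_region e1 e2" for r
    using wedge_witness(2)[OF wedge that] v X_def by simp
  ultimately show False by fastforce
qed

lemma wedge_witness_lower_start:
  assumes wedge: "(e1, e2) \<in> wedges" and v: "wedge_witness e1 e2 = fst e2"
    and f: "f \<in> E" "fst f = fst e2"
  shows "slope f \<le> slope e2"
proof (rule ccontr)
  assume "\<not> ?thesis"
  then have steeper: "slope e2 < slope f" by simp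
  note w = wedgesD[OF wedge]
  define X where "X = fst (fst e2)"
  have X: "fst (fst e1) \<le> X" "fst (fst e2) \<le> X" "X < fst (snd e1)"
    using wedge_witness(1)[OF wedge] v unfolding wedge_region_def X_def by auto
  have "f \<noteq> e1" using f w(3) wedgesD(4)[OF wedge] by (metis less_irrefl prod.expand)
  moreover have "height_at f X = height_at e2 X"
    using f(2) unfolding X_def height_at_def by simp
  ultimately obtain r where "r \<in> wedge_region e1 e2" "X < fst r"
    using wedge_region_beyond_edge[OF wedge f(1) _ _ _ _ X] steeper wedge_upper_above[OF wedge X(3)]
      left_lt_right[OF f(1)] f(2)
    unfolding below_right_of_def X_def by fastforce
  moreover have "fst r \<le> X" if "r \<in> wedge_region e1 e2" for r
    using wedge_witness(2)[OF wedge that] v X_def by simp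
  ultimately show False by fastforce
qed

lemma wedge_witness_interior:
  assumes wedge: "(e1, e2) \<in> wedges" and v: "v = wedge_witness e1 e2" "v \<notin> {fst e1, fst e2}"
  shows "fst (fst e1) < fst v" "fst v < fst (snd e1)" "snd v < height_at e1 (fst v)"
    and "fst (fst e2) < fst v" "fst v < fst (snd e2)" "height_at e2 (fst v) < snd v"
proof -
  note w = wedgesD[OF wedge]
  have region: "v \<in> wedge_region e1 e2" using wedge_witness(1)[OF wedge] v(1) by simp
  then have vV: "v \<in> V" unfolding wedge_region_def by simp
  have "fst e1 \<noteq> v" "fst e2 \<noteq> v" using v(2) by auto
  then have "fst (fst e1) \<noteq> fst v" "fst (fst e2) \<noteq> fst v"
    using vertex_eqI[OF endpoints_in_V(1)[OF w(1)] vV] vertex_eqI[OF endpoints_in_V(1)[OF w(2)] vV]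
    by auto
  then show inner: "fst (fst e1) < fst v" "fst v < fst (snd e1)"
    "fst (fst e2) < fst v" "fst v < fst (snd e2)"
    using region w(3) unfolding wedge_region_def by auto
  show "snd v < height_at e1 (fst v)" "height_at e2 (fst v) < snd v"
    using region vertex_off_edge[OF vV w(1) inner(1,2)] vertex_off_edge[OF vV w(2) inner(3,4)]
    unfolding wedge_region_def by auto
qed

lemma wedge_witness_interior_below_upper:
  assumes wedge: "(e1, e2) \<in> wedges" and v: "v = wedge_witness e1 e2" "v \<notin> {fst e1, fst e2}"
    and f: "f \<in> E" "fst (fst f) < fst v" "fst v < fst (snd f)" "snd v < height_at f (fst v)"
  shows "height_at e1 (fst v) \<le> height_at f (fst v)"
proof (rule ccontr)
  assume "\<not> ?thesis"
  then have below: "height_at f (fst v) < height_at e1 (fst v)" by simp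
  note inner = wedge_witness_interior[OF wedge v]
  have "f \<noteq> e1" using below by auto
  moreover have "f \<noteq> e2" using inner(6) f(4) by auto
  moreover have "below_right_of (fst v) f e1" "below_right_of (fst v) e2 f"
    using below inner(6) f(4) unfolding below_right_of_def by auto
  ultimately obtain r where "r \<in> wedge_region e1 e2" "fst v < fst r"
    using wedge_region_beyond_edge[OF wedge f(1)] f(2,3) inner(1,2,4) by (meson less_imp_le)
  moreover have "fst r \<le> fst v" if "r \<in> wedge_region e1 e2" for r
    using wedge_witness(2)[OF wedge that] v(1) by simp
  ultimately show False by fastforce
qed

lemma wedges_consecutive_pairs:
  "(e1, e2) \<in> wedges \<Longrightarrow> (e1, e2) \<in> consecutive_pairs slope (in_edges (snd e1))"
  unfolding wedges_def consecutive_pairs_def in_edges_def by auto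

lemma same_witness_tag_cases:
  assumes "wedge_witness e1 e2 = v" "wedge_witness e1' e2' = v"
    and same: "witness_tag e1 e2 = witness_tag e1' e2'"
  obtains "v = fst e1" "v = fst e1'"
    | "v = fst e2" "v = fst e2'"
    | "v \<notin> {fst e1, fst e2}" "v \<notin> {fst e1', fst e2'}"
proof -
  have tags: "witness_tag e1 e2 = (if v = fst e1 then 0 else if v = fst e2 then 1 else 2)"
    "witness_tag e1' e2' = (if v = fst e1' then 0 else if v = fst e2' then 1 else 2)"
    using assms(1,2) by (simp_all add: witness_tag_def)
  have tag_eq: "witness_tag e1' e2' = witness_tag e1 e2" using same by simp
  show ?thesis
  proof (cases "v = fst e1")
    case True
    have "v = fst e1'"
    proof (rule ccontr)
      assume "v \<noteq> fst e1'"
      then have "witness_tag e1' e2' \<noteq> 0" using tags(2) by simp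
      then show False using tag_eq tags(1) True by simp
    qed
    then show ?thesis using True that(1) by blast
  next
    case not_upper: False
    show ?thesis
    proof (cases "v = fst e2")
      case True
      then have "witness_tag e1' e2' = 1" using tag_eq tags(1) not_upper by simp
      then have "v = fst e2'" using tags(2) by (cases "v = fst e1'"; cases "v = fst e2'") auto
      then show ?thesis using True that(2) by blast
    next
      case False
      then have "witness_tag e1' e2' = 2" using tag_eq tags(1) not_upper by simp
      then have "v \<notin> {fst e1', fst e2'}"
        using tags(2) by (cases "v = fst e1'"; cases "v = fst e2'") auto
      then show ?thesis using False not_upper that(3) by blast
    qed
  qed
qed

text \<open>Tag 0: \<open>e1\<close> is the least steep edge leaving the witness; tag 1: \<open>e2\<close> is the steepest
  edge leaving it; tag 2: \<open>e1\<close> is the lowest edge passing above it.\<close>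
lemma wedge_witness_determines_edge:
  assumes wedge: "(e1, e2) \<in> wedges" and wedge': "(e1', e2') \<in> wedges"
    and same: "wedge_witness e1 e2 = wedge_witness e1' e2'" "witness_tag e1 e2 = witness_tag e1' e2'"
  shows "e1 = e1' \<or> e2 = e2'"
proof -
  define v where "v = wedge_witness e1 e2"
  have v': "v = wedge_witness e1' e2'" using same(1) v_def by simp
  note w = wedgesD[OF wedge] and w' = wedgesD[OF wedge']
  consider "v = fst e1" "v = fst e1'" | "v = fst e2" "v = fst e2'"
    | "v \<notin> {fst e1, fst e2}" "v \<notin> {fst e1', fst e2'}"
    by (rule same_witness_tag_cases[OF v_def[symmetric] v'[symmetric] same(2)])
  then show ?thesis
  proof cases
    case 1
    then have "wedge_witness e1 e2 = fst e1" "wedge_witness e1' e2' = fst e1'" "fst e1 = fst e1'"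
      using v_def v' by simp_all
    then have "slope e1 = slope e1'"
      using wedge_witness_upper_start[OF wedge _ w'(1)] wedge_witness_upper_start[OF wedge' _ w(1)]
      by (metis order_antisym)
    then show ?thesis using same_left_end_slope_inj[OF w(1) w'(1)] \<open>fst e1 = fst e1'\<close> by simp
  next
    case 2
    then have "wedge_witness e1 e2 = fst e2" "wedge_witness e1' e2' = fst e2'" "fst e2 = fst e2'"
      using v_def v' by simp_all
    then have "slope e2 = slope e2'"
      using wedge_witness_lower_start[OF wedge _ w'(2)] wedge_witness_lower_start[OF wedge' _ w(2)]
      by (metis order_antisym)
    then show ?thesis using same_left_end_slope_inj[OF w(2) w'(2)] \<open>fst e2 = fst e2'\<close> by simp
  next
    case 3
    note inner = wedge_witness_interior[OF wedge v_def 3(1)]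
      and inner' = wedge_witness_interior[OF wedge' v' 3(2)]
    have "height_at e1 (fst v) \<le> height_at e1' (fst v)" "height_at e1' (fst v) \<le> height_at e1 (fst v)"
      using wedge_witness_interior_below_upper[OF wedge v_def 3(1) w'(1) inner'(1-3)]
        wedge_witness_interior_below_upper[OF wedge' v' 3(2) w(1) inner(1-3)] by simp_all
    then have "e1 = e1'"
      using height_at_neq[OF w(1) w'(1) _ inner(1,2)] inner'(1,2) by (force simp: spans_def)
    then show ?thesis ..
  qed
qed

lemma inj_on_wedge_witness:
  "inj_on (\<lambda>(e1, e2). (wedge_witness e1 e2, witness_tag e1 e2)) wedges"
proof (rule inj_onI, clarify)
  fix e1 e2 e1' e2'
  assume wedge: "(e1, e2) \<in> wedges" and wedge': "(e1', e2') \<in> wedges"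
    and "wedge_witness e1 e2 = wedge_witness e1' e2'" "witness_tag e1 e2 = witness_tag e1' e2'"
  then have "e1 = e1' \<or> e2 = e2'" by (rule wedge_witness_determines_edge)
  moreover have "snd e1' = snd e1" if "e1 = e1' \<or> e2 = e2'"
    using that wedgesD(3)[OF wedge] wedgesD(3)[OF wedge'] by auto
  ultimately have "(e1, e2) \<in> consecutive_pairs slope (in_edges (snd e1))"
    "(e1', e2') \<in> consecutive_pairs slope (in_edges (snd e1))" "e1 = e1' \<or> e2 = e2'"
    using wedges_consecutive_pairs[OF wedge] wedges_consecutive_pairs[OF wedge'] by auto
  then show "e1 = e1' \<and> e2 = e2'"
    using consecutive_pairs_unique_fst[OF inj_on_slope_in_edges]
      consecutive_pairs_unique_snd[OF inj_on_slope_in_edges] by blast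
qed

lemma card_wedges_le: "card wedges \<le> 3 * card V"
proof -
  let ?g = "\<lambda>(e1, e2). (wedge_witness e1 e2, witness_tag e1 e2)"
  have "?g z \<in> V \<times> {0, 1, 2}" if "z \<in> wedges" for z
    using that wedge_witness(1)[of "fst z" "snd z"]
    by (cases z) (auto simp: wedge_region_def witness_tag_def)
  then have "?g ` wedges \<subseteq> V \<times> {0, 1, 2}" by blast
  then have "card (?g ` wedges) \<le> card (V \<times> {0::nat, 1, 2})"
    by (rule card_mono[rotated]) (simp add: finite_V)
  then show ?thesis
    using card_image[OF inj_on_wedge_witness] by (simp add: card_cartesian_product)
qed

lemma card_edges_le_wedges: "card E \<le> card wedges + card V"
proof -
  have disjoint_in_edges: "in_edges v \<inter> in_edges w = {}" if "v \<noteq> w" for v w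
    using that unfolding in_edges_def by auto
  have "E = (\<Union>w\<in>V. in_edges w)"
    unfolding in_edges_def using endpoints_in_V by auto
  then have "card E = card (\<Union>w\<in>V. in_edges w)" by (rule arg_cong)
  also have "\<dots> = (\<Sum>w\<in>V. card (in_edges w))"
    using finite_V finite_E disjoint_in_edges
    by (intro card_UN_disjoint) (auto simp: in_edges_def)
  also have "\<dots> \<le> (\<Sum>w\<in>V. card (consecutive_pairs slope (in_edges w)) + 1)"
    using finite_E inj_on_slope_in_edges
    by (intro sum_mono card_le_Suc_card_consecutive_pairs) (simp_all add: in_edges_def)
  also have "\<dots> = card wedges + card V"
  proof -
    have "consecutive_pairs slope (in_edges v) \<inter> consecutive_pairs slope (in_edges w) = {}"
      if "v \<noteq> w" for v w
      using consecutive_pairs_subset disjoint_in_edges[OF that] by blast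
    then have "card wedges = (\<Sum>w\<in>V. card (consecutive_pairs slope (in_edges w)))"
      unfolding wedges_def using finite_V finite_E
      by (intro card_UN_disjoint) (auto simp: in_edges_def intro: finite_consecutive_pairs)
    then show ?thesis by (simp add: sum.distrib sum_Suc)
  qed
  finally show ?thesis .
qed

theorem card_edges_le: "card E \<le> 4 * card V"
  using card_edges_le_wedges card_wedges_le by simp

end

section \<open>The crossing lemma\<close>

context segment_graph
begin

lemma card_edges_le_crossing_pairs: "card E \<le> 4 * card V + card crossing_pairs"
proof -
  define E' where "E' = E - fst ` crossing_pairs"
  interpret plane: plane_segment_graph V E'
  proof
    show "E' \<subseteq> V \<times> V" using edges_subset E'_def by auto
    show "\<not> crosses e f" if "e \<in> E'" "f \<in> E'" "e \<noteq> f" for e f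
    proof
      assume "crosses e f"
      then have "(e, f) \<in> crossing_pairs" using that E'_def crossing_pairs_def by auto
      then show False using that(1) E'_def by force
    qed
  qed (use finite_V inj_on_fst_V left_lt_right vertex_off_edge E'_def in auto)
  have "card E \<le> card (E' \<union> fst ` crossing_pairs)"
    by (rule card_mono) (auto simp: E'_def finite_E finite_crossing_pairs)
  also have "\<dots> \<le> card E' + card crossing_pairs"
    using card_Un_le card_image_le[OF finite_crossing_pairs] by (meson add_left_mono order_trans)
  finally show ?thesis using plane.card_edges_le by simp
qed

lemma induced_segment_graph: "S \<subseteq> V \<Longrightarrow> segment_graph S {e \<in> E. fst e \<in> S \<and> snd e \<in> S}"
  by unfold_locales
    (use finite_V inj_on_fst_V left_lt_right vertex_off_edge in \<open>auto intro: finite_subset inj_on_subset\<close>)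

text \<open>The expectation of \<open>card_edges_le_crossing_pairs\<close> over the subgraphs induced by a
  \<open>p\<close>-random set of vertices: an edge survives with probability \<open>p ^ 2\<close>, a crossing pair with
  probability \<open>p ^ 4\<close>.\<close>
lemma card_edges_le_crossing_pairs_sampled:
  fixes p :: real
  assumes four: "\<And>e f. (e, f) \<in> crossing_pairs \<Longrightarrow> card {fst e, snd e, fst f, snd f} = 4"
    and p: "0 < p" "p \<le> 1"
  shows "p ^ 2 * card E \<le> 4 * p * card V + p ^ 4 * card crossing_pairs"
proof -
  let ?w = "random_subset_weight p V"
  let ?ends = "\<lambda>(e, f). {fst e, snd e, fst f, snd f}"
  have "real (card {e \<in> E. {fst e, snd e} \<subseteq> S})
      \<le> 4 * real (card {v \<in> V. {v} \<subseteq> S}) + card {z \<in> crossing_pairs. ?ends z \<subseteq> S}"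
    if S: "S \<in> Pow V" for S
  proof -
    interpret sub: segment_graph S "{e \<in> E. fst e \<in> S \<and> snd e \<in> S}"
      using induced_segment_graph S by blast
    have "sub.crossing_pairs \<subseteq> {z \<in> crossing_pairs. ?ends z \<subseteq> S}"
      unfolding sub.crossing_pairs_def crossing_pairs_def by auto
    then have "card sub.crossing_pairs \<le> card {z \<in> crossing_pairs. ?ends z \<subseteq> S}"
      by (rule card_mono[rotated]) (simp add: finite_crossing_pairs)
    moreover have "{v \<in> V. {v} \<subseteq> S} = S" using S by auto
    ultimately show ?thesis using sub.card_edges_le_crossing_pairs by simp
  qed
  then have "(\<Sum>S\<in>Pow V. ?w S * card {e \<in> E. {fst e, snd e} \<subseteq> S})
      \<le> (\<Sum>S\<in>Pow V. ?w S * (4 * real (card {v \<in> V. {v} \<subseteq> S}) + card {z \<in> crossing_pairs. ?ends z \<subseteq> S}))"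
    using p by (intro sum_mono mult_left_mono) (simp_all add: random_subset_weight_def)
  also have "\<dots> = 4 * (\<Sum>S\<in>Pow V. ?w S * card {v \<in> V. {v} \<subseteq> S})
      + (\<Sum>S\<in>Pow V. ?w S * card {z \<in> crossing_pairs. ?ends z \<subseteq> S})"
    by (simp add: sum.distrib sum_distrib_left algebra_simps)
  also have "(\<Sum>S\<in>Pow V. ?w S * card {v \<in> V. {v} \<subseteq> S}) = (\<Sum>v\<in>V. p ^ card {v})"
    by (rule sum_random_subset_weight_count) (simp_all add: finite_V)
  also have "(\<Sum>S\<in>Pow V. ?w S * card {z \<in> crossing_pairs. ?ends z \<subseteq> S})
      = (\<Sum>z\<in>crossing_pairs. p ^ card (?ends z))"
  proof (rule sum_random_subset_weight_count[OF finite_V finite_crossing_pairs])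
    fix z assume "z \<in> crossing_pairs"
    then obtain e f where "z = (e, f)" "e \<in> E" "f \<in> E" unfolding crossing_pairs_def by auto
    then show "?ends z \<subseteq> V" using endpoints_in_V by simp
  qed
  also have "(\<Sum>z\<in>crossing_pairs. p ^ card (?ends z)) = (\<Sum>z\<in>crossing_pairs. p ^ 4)"
    using four by (intro sum.cong) auto
  also have "\<dots> = p ^ 4 * card crossing_pairs"
    by simp
  also have "(\<Sum>S\<in>Pow V. ?w S * card {e \<in> E. {fst e, snd e} \<subseteq> S}) = (\<Sum>e\<in>E. p ^ card {fst e, snd e})"
    by (rule sum_random_subset_weight_count) (simp_all add: finite_V finite_E endpoints_in_V)
  also have "\<dots> = (\<Sum>e\<in>E. p ^ 2)"
  proof (rule sum.cong[OF refl])
    fix e assume "e \<in> E"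
    then have "fst e \<noteq> snd e" using left_lt_right by (metis less_irrefl)
    then show "p ^ card {fst e, snd e} = p ^ 2" by (simp add: power2_eq_square)
  qed
  also have "\<dots> = p ^ 2 * card E"
    by simp
  finally show ?thesis by (simp add: algebra_simps)
qed

theorem crossing_lemma:
  assumes four: "\<And>e f. (e, f) \<in> crossing_pairs \<Longrightarrow> card {fst e, snd e, fst f, snd f} = 4"
    and dense: "8 * card V \<le> card E"
  shows "real (card E) ^ 3 \<le> 128 * real (card V) ^ 2 * card crossing_pairs"
proof (cases "card V = 0")
  case True
  then have "E = {}" using finite_V edges_subset by auto
  then show ?thesis by simp
next
  case False
  define n where "n = real (card V)"
  define m where "m = real (card E)"
  \<comment> \<open>Chosen so that \<open>4 * p * n\<close> is half of \<open>p ^ 2 * m\<close>.\<close>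
  define p where "p = 8 * n / m"
  have n: "n > 0" and m: "8 * n \<le> m" using False dense unfolding n_def m_def by auto
  then have p: "0 < p" "p \<le> 1" unfolding p_def by auto
  have "p ^ 2 * m \<le> 4 * p * n + p ^ 4 * card crossing_pairs"
    using card_edges_le_crossing_pairs_sampled[OF four p] unfolding m_def n_def by simp
  then have "32 * n ^ 2 * m ^ 3 \<le> 4096 * n ^ 4 * card crossing_pairs"
    using n m unfolding p_def by (simp add: field_simps power2_eq_square power4_eq_xxxx power3_eq_cube)
  then show ?thesis
    using n unfolding m_def[symmetric] n_def[symmetric]
    by (simp add: power2_eq_square power4_eq_xxxx)
qed

end

section \<open>The Szemeredi--Trotter theorem\<close>

lemma line_eq_graph:
  assumes l: "is_line l" and ab: "a \<in> l" "b \<in> l" "fst a \<noteq> fst b"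
  shows "p \<in> l \<longleftrightarrow> snd p = height_at (a, b) (fst p)"
proof -
  obtain u v c where uv: "(u, v) \<noteq> (0, 0)" and l_eq: "l = {(x, y). u * x + v * y = c}"
    using l unfolding is_line_def by blast
  obtain xa ya xb yb where a: "a = (xa, ya)" and b: "b = (xb, yb)" by (cases a, cases b)
  have ea: "u * xa + v * ya = c" and eb: "u * xb + v * yb = c" using ab l_eq a b by auto
  have xab: "xa \<noteq> xb" using ab(3) a b by simp
  have "v \<noteq> 0"
  proof
    assume "v = 0"
    then have "u \<noteq> 0" "u * xa = u * xb" using uv ea eb by auto
    then show False using xab by simp
  qed
  then have slope_ab: "slope (a, b) = - u / v"
    using ea eb xab unfolding slope_def a b by (simp add: field_simps)
  have "height_at (a, b) x = (c - u * x) / v" for x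
    using \<open>v \<noteq> 0\<close> unfolding height_at_def slope_ab unfolding a ea[symmetric]
    by (simp add: field_simps)
  moreover have "p \<in> l \<longleftrightarrow> u * fst p + v * snd p = c"
    using l_eq by (cases p) auto
  moreover have "\<dots> \<longleftrightarrow> snd p = (c - u * fst p) / v"
    using \<open>v \<noteq> 0\<close> by (auto simp: field_simps)
  ultimately show ?thesis by simp
qed

lemma line_vertical:
  assumes l: "is_line l" and pq: "p \<in> l" "q \<in> l" "fst p = fst q" "p \<noteq> q"
  shows "l = {z. fst z = fst p}"
proof -
  obtain u v c where uv: "(u, v) \<noteq> (0, 0)" and l_eq: "l = {(x, y). u * x + v * y = c}"
    using l unfolding is_line_def by blast
  obtain xp yp xq yq where p: "p = (xp, yp)" and q: "q = (xq, yq)" by (cases p, cases q)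
  have "u * xp + v * yp = c" "u * xq + v * yq = c" "xp = xq" "yp \<noteq> yq"
    using pq l_eq p q by auto
  then have "v = 0" by (metis add_left_cancel mult_cancel_left)
  then have "u \<noteq> 0" "u * xp = c" using uv \<open>u * xp + v * yp = c\<close> by auto
  then show ?thesis using l_eq \<open>v = 0\<close> p by (auto simp: field_simps)
qed

lemma line_unique:
  assumes "is_line l" "is_line l'" "p \<in> l" "q \<in> l" "p \<in> l'" "q \<in> l'" "p \<noteq> q"
  shows "l = l'"
proof (cases "fst p = fst q")
  case True
  then show ?thesis using line_vertical[OF assms(1,3,4) True assms(7)] line_vertical[OF assms(2,5,6) True assms(7)]
    by simp
next
  case False
  then show ?thesis using line_eq_graph[OF assms(1,3,4) False] line_eq_graph[OF assms(2,5,6) False]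
    by blast
qed

locale points_lines =
  fixes P :: "point set" and L :: "point set set"
  assumes finite_P: "finite P" and inj_on_fst_P: "inj_on fst P" and finite_L: "finite L"
    and lines: "l \<in> L \<Longrightarrow> is_line l"
begin

definition line_edges :: "segment set" where
  "line_edges = (\<Union>l\<in>L. consecutive_pairs fst (P \<inter> l))"

definition line_of :: "segment \<Rightarrow> point set" where
  "line_of e = (SOME l. l \<in> L \<and> e \<in> consecutive_pairs fst (P \<inter> l))"

lemma line_edgeD:
  assumes "e \<in> line_edges"
  shows "line_of e \<in> L" "fst e \<in> P" "snd e \<in> P" "fst e \<in> line_of e" "snd e \<in> line_of e"
    "fst (fst e) < fst (snd e)"
    "\<And>c. c \<in> P \<Longrightarrow> c \<in> line_of e \<Longrightarrow> fst (fst e) < fst c \<Longrightarrow> fst c < fst (snd e) \<Longrightarrow> False"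
proof -
  have "\<exists>l. l \<in> L \<and> e \<in> consecutive_pairs fst (P \<inter> l)"
    using assms unfolding line_edges_def by blast
  then have "line_of e \<in> L \<and> e \<in> consecutive_pairs fst (P \<inter> line_of e)"
    unfolding line_of_def by (rule someI_ex)
  then have "line_of e \<in> L" "fst e \<in> P \<inter> line_of e" "snd e \<in> P \<inter> line_of e"
    "fst (fst e) < fst (snd e)" "\<not> (\<exists>c\<in>P \<inter> line_of e. fst (fst e) < fst c \<and> fst c < fst (snd e))"
    unfolding consecutive_pairs_def by (simp_all add: case_prod_beta)
  then show "line_of e \<in> L" "fst e \<in> P" "snd e \<in> P" "fst e \<in> line_of e" "snd e \<in> line_of e"
    "fst (fst e) < fst (snd e)"
    "\<And>c. c \<in> P \<Longrightarrow> c \<in> line_of e \<Longrightarrow> fst (fst e) < fst c \<Longrightarrow> fst c < fst (snd e) \<Longrightarrow> False"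
    by blast+
qed

lemma mem_line_of_iff:
  assumes "e \<in> line_edges"
  shows "p \<in> line_of e \<longleftrightarrow> snd p = height_at e (fst p)"
proof -
  have "fst (fst e) \<noteq> fst (snd e)" using line_edgeD(6)[OF assms] by simp
  from line_eq_graph[OF lines[OF line_edgeD(1)[OF assms]] line_edgeD(4,5)[OF assms] this]
  show ?thesis by simp
qed

lemma point_eqI: "p \<in> P \<Longrightarrow> q \<in> P \<Longrightarrow> fst p = fst q \<Longrightarrow> p = q"
  using inj_on_fst_P by (auto simp: inj_on_def)

sublocale segment_graph P line_edges
proof
  show "line_edges \<subseteq> P \<times> P" using line_edgeD(2,3) by auto
  show "snd p \<noteq> height_at e (fst p)"
    if "p \<in> P" "e \<in> line_edges" "fst (fst e) < fst p" "fst p < fst (snd e)" for p e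
    using that line_edgeD(7)[OF that(2,1)] mem_line_of_iff[OF that(2)] by blast
qed (use finite_P inj_on_fst_P line_edgeD(6) in auto)

lemma point_on_line_edge:
  assumes e: "e \<in> line_edges" and x: "spans e x" and q: "(x, height_at e x) \<in> P"
  shows "(x, height_at e x) \<in> {fst e, snd e}"
proof -
  have "(x, height_at e x) \<in> line_of e" using mem_line_of_iff[OF e] by simp
  then have "x = fst (fst e) \<or> x = fst (snd e)"
    using line_edgeD(7)[OF e q] x unfolding spans_def by force
  moreover have "(fst (fst e), height_at e (fst (fst e))) = fst e"
    and "(fst (snd e), height_at e (fst (snd e))) = snd e"
    using height_at_left[of e] height_at_right[of e] line_edgeD(6)[OF e] by (simp_all add: prod_eq_iff)
  ultimately show ?thesis by auto
qed

lemma same_line_edges_meet_at_endpoint: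
  assumes e: "e \<in> line_edges" and f: "f \<in> line_edges" and same: "line_of e = line_of f"
    and ne: "e \<noteq> f" and z: "spans e z" "spans f z"
  shows "(z, height_at e z) \<in> {fst e, snd e} \<inter> {fst f, snd f}"
proof -
  note de = line_edgeD[OF e] and df = line_edgeD[OF f]
  have "\<not> (fst (fst e) < fst (fst f) \<and> fst (fst f) < fst (snd e))"
    "\<not> (fst (fst e) < fst (snd f) \<and> fst (snd f) < fst (snd e))"
    "\<not> (fst (fst f) < fst (fst e) \<and> fst (fst e) < fst (snd f))"
    "\<not> (fst (fst f) < fst (snd e) \<and> fst (snd e) < fst (snd f))"
    using de(7)[OF df(2)] de(7)[OF df(3)] df(7)[OF de(2)] df(7)[OF de(3)] de(4,5) df(4,5) same
    by auto
  then consider "fst (fst e) = fst (fst f)" "fst (snd e) = fst (snd f)"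
    | "z = fst (snd e)" "z = fst (fst f)" | "z = fst (fst e)" "z = fst (snd f)"
    using z de(6) df(6) unfolding spans_def by linarith
  then show ?thesis
  proof cases
    case 1
    then have "fst e = fst f" "snd e = snd f" using point_eqI de(2,3) df(2,3) by auto
    then show ?thesis using ne by (simp add: prod_eq_iff)
  next
    case 2
    then have "snd e = fst f" using point_eqI de(3) df(2) by auto
    moreover have "(z, height_at e z) = snd e" using 2 height_at_right de(6) by (simp add: prod_eq_iff)
    ultimately show ?thesis by simp
  next
    case 3
    then have "fst e = snd f" using point_eqI de(2) df(3) by auto
    moreover have "(z, height_at e z) = fst e" using 3 height_at_left by (simp add: prod_eq_iff)
    ultimately show ?thesis by simp
  qed
qed

lemma crossing_pairs_crossing_point:
  assumes "(e, f) \<in> crossing_pairs"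
  obtains q where "spans e (fst q)" "spans f (fst q)" "q \<in> line_of e" "q \<in> line_of f" "q \<notin> P"
    "line_of e \<noteq> line_of f"
proof -
  have e: "e \<in> line_edges" and f: "f \<in> line_edges" and ne: "e \<noteq> f" and "crosses e f"
    using assms unfolding crossing_pairs_def by auto
  then obtain x where x: "spans e x" "spans f x" "height_at e x = height_at f x"
    "(x, height_at e x) \<notin> {fst e, snd e} \<inter> {fst f, snd f}"
    unfolding crosses_def by blast
  define q where "q = (x, height_at e x)"
  have "q \<in> line_of e" "q \<in> line_of f"
    using mem_line_of_iff[OF e] mem_line_of_iff[OF f] x(3) q_def by simp_all
  moreover have "line_of e \<noteq> line_of f"
    using same_line_edges_meet_at_endpoint[OF e f _ ne x(1,2)] x(4) by auto
  moreover have "q \<notin> P"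
    using point_on_line_edge[OF e x(1)] point_on_line_edge[OF f x(2)] x(3,4) q_def by auto
  ultimately show ?thesis using that[of q] x(1,2) q_def by simp
qed

lemma card_crossing_pairs_le: "card crossing_pairs \<le> card L ^ 2"
proof -
  let ?g = "\<lambda>(e, f). (line_of e, line_of f)"
  have inj: "inj_on ?g crossing_pairs"
  proof (rule inj_onI, clarify)
    fix e f e' f'
    assume ef: "(e, f) \<in> crossing_pairs" and ef': "(e', f') \<in> crossing_pairs"
      and lines_eq: "line_of e = line_of e'" "line_of f = line_of f'"
    have edges: "e \<in> line_edges" "f \<in> line_edges" "e' \<in> line_edges" "f' \<in> line_edges"
      using ef ef' unfolding crossing_pairs_def by auto
    obtain q where q: "spans e (fst q)" "spans f (fst q)" "q \<in> line_of e" "q \<in> line_of f" "q \<notin> P"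
      "line_of e \<noteq> line_of f"
      using crossing_pairs_crossing_point[OF ef] by blast
    obtain q' where q': "spans e' (fst q')" "spans f' (fst q')" "q' \<in> line_of e'" "q' \<in> line_of f'"
      using crossing_pairs_crossing_point[OF ef'] by blast
    have "q = q'"
      using line_unique[OF lines lines q(3) q'(3)[folded lines_eq] q(4) q'(4)[folded lines_eq]] q(6)
        line_edgeD(1) edges by blast
    have on_edge: "(fst q, height_at g (fst q)) = q" if "g \<in> line_edges" "q \<in> line_of g" for g
      using mem_line_of_iff[OF that(1)] that(2) by (simp add: prod_eq_iff)
    show "e = e' \<and> f = f'"
    proof (intro conjI; rule ccontr)
      assume "e \<noteq> e'"
      then have "q \<in> {fst e, snd e}"
        using same_line_edges_meet_at_endpoint[OF edges(1,3) lines_eq(1) _ q(1)] q'(1) \<open>q = q'\<close>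
          on_edge[OF edges(1) q(3)] by auto
      then show False using q(5) line_edgeD(2,3)[OF edges(1)] by auto
    next
      assume "f \<noteq> f'"
      then have "q \<in> {fst f, snd f}"
        using same_line_edges_meet_at_endpoint[OF edges(2,4) lines_eq(2) _ q(2)] q'(2) \<open>q = q'\<close>
          on_edge[OF edges(2) q(4)] by auto
      then show False using q(5) line_edgeD(2,3)[OF edges(2)] by auto
    qed
  qed
  have "?g ` crossing_pairs \<subseteq> L \<times> L"
    using line_edgeD(1) unfolding crossing_pairs_def by auto
  then have "card (?g ` crossing_pairs) \<le> card (L \<times> L)"
    by (rule card_mono[rotated]) (simp add: finite_L)
  then have "card crossing_pairs \<le> card (L \<times> L)"
    using card_image[OF inj] by simp
  then show ?thesis by (simp add: card_cartesian_product power2_eq_square)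
qed

lemma crossing_pairs_distinct_ends:
  assumes "(e, f) \<in> crossing_pairs"
  shows "card {fst e, snd e, fst f, snd f} = 4"
proof -
  have e: "e \<in> line_edges" and f: "f \<in> line_edges" using assms unfolding crossing_pairs_def by auto
  obtain q where q: "q \<in> line_of e" "q \<in> line_of f" "q \<notin> P" "line_of e \<noteq> line_of f"
    using crossing_pairs_crossing_point[OF assms] by metis
  have "p \<notin> {fst f, snd f}" if "p \<in> {fst e, snd e}" for p
  proof
    assume "p \<in> {fst f, snd f}"
    then have "p \<in> line_of e" "p \<in> line_of f" "p \<in> P"
      using that line_edgeD(2-5)[OF e] line_edgeD(2-5)[OF f] by auto
    then show False
      using line_unique[OF lines lines _ q(1) _ q(2)] line_edgeD(1)[OF e] line_edgeD(1)[OF f] q(3,4)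
      by blast
  qed
  moreover have "fst e \<noteq> snd e" "fst f \<noteq> snd f"
    using line_edgeD(6)[OF e] line_edgeD(6)[OF f] by auto
  ultimately show ?thesis by auto
qed

lemma card_incidences_le: "card (incidences P L) \<le> card line_edges + card L"
proof -
  have "incidences P L = (\<lambda>(l, p). (p, l)) ` (SIGMA l:L. P \<inter> l)"
    unfolding incidences_def by auto
  then have "card (incidences P L) = card (SIGMA l:L. P \<inter> l)"
    by (simp add: card_image inj_on_def)
  also have "\<dots> = (\<Sum>l\<in>L. card (P \<inter> l))"
    using finite_L finite_P by simp
  also have "\<dots> \<le> (\<Sum>l\<in>L. card (consecutive_pairs fst (P \<inter> l)) + 1)"
    using finite_P inj_on_fst_P
    by (intro sum_mono card_le_Suc_card_consecutive_pairs) (auto intro: inj_on_subset)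
  also have "\<dots> = card line_edges + card L"
  proof -
    have "consecutive_pairs fst (P \<inter> l) \<inter> consecutive_pairs fst (P \<inter> l') = {}"
      if l: "l \<in> L" "l' \<in> L" "l \<noteq> l'" for l l'
    proof (rule equals0I)
      fix z assume "z \<in> consecutive_pairs fst (P \<inter> l) \<inter> consecutive_pairs fst (P \<inter> l')"
      then have "fst z \<in> l" "snd z \<in> l" "fst z \<in> l'" "snd z \<in> l'" "fst (fst z) < fst (snd z)"
        unfolding consecutive_pairs_def by (simp_all add: case_prod_beta)
      moreover have "fst z \<noteq> snd z" using \<open>fst (fst z) < fst (snd z)\<close> by auto
      ultimately have "l = l'" by (intro line_unique[OF lines[OF l(1)] lines[OF l(2)]])
      then show False using l(3) by simp
    qed
    then have "card line_edges = (\<Sum>l\<in>L. card (consecutive_pairs fst (P \<inter> l)))"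
      unfolding line_edges_def using finite_L finite_P
      by (intro card_UN_disjoint) (auto intro: finite_consecutive_pairs)
    then show ?thesis by (simp add: sum.distrib sum_Suc)
  qed
  finally show ?thesis .
qed

theorem szemeredi_trotter_distinct_abscissae:
  "real (card (incidences P L))
     \<le> real (card L) + 8 * real (card P) + root 3 (128 * real (card P) ^ 2 * real (card L) ^ 2)"
proof -
  have "real (card line_edges) \<le> 8 * card P + root 3 (128 * real (card P) ^ 2 * real (card L) ^ 2)"
  proof (cases "8 * card P \<le> card line_edges")
    case True
    have "real (card line_edges) ^ 3 \<le> 128 * real (card P) ^ 2 * card crossing_pairs"
      using crossing_lemma[OF crossing_pairs_distinct_ends True] by simp
    also have "\<dots> \<le> 128 * real (card P) ^ 2 * real (card L) ^ 2"
      using card_crossing_pairs_le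
      by (intro mult_left_mono) (simp_all add: of_nat_power[symmetric] del: of_nat_power)
    finally have "root 3 (real (card line_edges) ^ 3) \<le> root 3 (128 * real (card P) ^ 2 * real (card L) ^ 2)"
      by simp
    then show ?thesis by (simp add: odd_real_root_power_cancel)
  next
    case False
    then have "real (card line_edges) \<le> 8 * card P" by simp
    moreover have "0 \<le> root 3 (128 * real (card P) ^ 2 * real (card L) ^ 2)" by simp
    ultimately show ?thesis by linarith
  qed
  then show ?thesis using card_incidences_le by linarith
qed

end

definition shear :: "real \<Rightarrow> point \<Rightarrow> point" where
  "shear t p = (fst p + t * snd p, snd p)"

lemma inj_shear: "inj (shear t)"
  unfolding shear_def by (auto simp: inj_on_def)

lemma is_line_shear_image:
  assumes "is_line l"
  shows "is_line (shear t ` l)"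
proof -
  obtain a b c where ab: "(a, b) \<noteq> (0, 0)" and l: "l = {(x, y). a * x + b * y = c}"
    using assms unfolding is_line_def by blast
  have "shear t ` l = {(x, y). a * x + (b - a * t) * y = c}"
  proof (rule set_eqI)
    fix z :: point
    obtain x y where z: "z = (x, y)" by (cases z)
    have "z = shear t (x - t * y, y)" using z unfolding shear_def by simp
    then have "z \<in> shear t ` l \<longleftrightarrow> (x - t * y, y) \<in> l"
      using inj_image_mem_iff[OF inj_shear] by metis
    also have "\<dots> \<longleftrightarrow> a * x + (b - a * t) * y = c"
      using l by (auto simp: algebra_simps)
    finally show "z \<in> shear t ` l \<longleftrightarrow> z \<in> {(x, y). a * x + (b - a * t) * y = c}"
      using z by simp
  qed
  moreover have "(a, b - a * t) \<noteq> (0, 0)" using ab by auto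
  ultimately show ?thesis unfolding is_line_def by blast
qed

text \<open>A shear avoiding the finitely many slopes \<open>(x\<^sub>q - x\<^sub>p) / (y\<^sub>p - y\<^sub>q)\<close> gives distinct abscissae.\<close>
lemma shear_inj_on_fst:
  assumes "finite P"
  obtains t where "inj_on fst (shear t ` P)"
proof -
  let ?bad = "(\<lambda>(p, q). (fst q - fst p) / (snd p - snd q)) ` (P \<times> P)"
  have "finite ?bad" using assms by simp
  then obtain t where t: "t \<notin> ?bad"
    using ex_new_if_finite[OF infinite_UNIV_char_0] by blast
  have "inj_on fst (shear t ` P)"
  proof (rule inj_onI)
    fix u v assume "u \<in> shear t ` P" "v \<in> shear t ` P" and eq: "fst u = fst v"
    then obtain p q where pq: "p \<in> P" "q \<in> P" "u = shear t p" "v = shear t q" by blast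
    then have e: "fst p + t * snd p = fst q + t * snd q" using eq unfolding shear_def by simp
    show "u = v"
    proof (cases "snd p = snd q")
      case True
      then show ?thesis using e pq(3,4) unfolding shear_def by simp
    next
      case False
      then have "t = (fst q - fst p) / (snd p - snd q)" using e by (simp add: field_simps)
      then have "t \<in> ?bad" using pq by (intro image_eqI[of _ _ "(p, q)"]) auto
      then show ?thesis using t by simp
    qed
  qed
  then show ?thesis using that by blast
qed

lemma card_incidences_image:
  assumes "inj T"
  shows "card (incidences (T ` P) ((`) T ` L)) = card (incidences P L)"
proof -
  have "incidences (T ` P) ((`) T ` L) = (\<lambda>(p, l). (T p, T ` l)) ` incidences P L"
  proof
    show "incidences (T ` P) ((`) T ` L) \<subseteq> (\<lambda>(p, l). (T p, T ` l)) ` incidences P L"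
    proof
      fix z assume "z \<in> incidences (T ` P) ((`) T ` L)"
      then have "fst z \<in> T ` P" "snd z \<in> (`) T ` L" "fst z \<in> snd z"
        unfolding incidences_def by (simp_all add: case_prod_beta)
      moreover obtain p l where "p \<in> P" "fst z = T p" "l \<in> L" "snd z = T ` l"
        using calculation(1,2) by blast
      ultimately have "z = (T p, T ` l)" "(p, l) \<in> incidences P L"
        using inj_image_mem_iff[OF assms] unfolding incidences_def by (simp_all add: prod_eq_iff)
      then show "z \<in> (\<lambda>(p, l). (T p, T ` l)) ` incidences P L"
        by (intro image_eqI[of _ _ "(p, l)"]) simp_all
    qed
  qed (auto simp: incidences_def)
  moreover have "inj_on (\<lambda>(p, l). (T p, T ` l)) (incidences P L)"
  proof (rule inj_onI)
    fix z z' assume "(\<lambda>(p, l). (T p, T ` l)) z = (\<lambda>(p, l). (T p, T ` l)) z'"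
    then have "T (fst z) = T (fst z')" "T ` snd z = T ` snd z'" by (simp_all add: case_prod_beta)
    then show "z = z'" using inj_eq[OF assms] inj_image_eq_iff[OF assms] by (simp add: prod_eq_iff)
  qed
  ultimately show ?thesis using card_image by metis
qed

theorem szemeredi_trotter:
  assumes "finite P" "finite L" "\<forall>l\<in>L. is_line l"
  shows "real (card (incidences P L))
           \<le> real (card L) + 8 * real (card P) + root 3 (128 * real (card P) ^ 2 * real (card L) ^ 2)"
proof -
  obtain t where t: "inj_on fst (shear t ` P)" using shear_inj_on_fst[OF assms(1)] by blast
  interpret sheared: points_lines "shear t ` P" "(`) (shear t) ` L"
    using assms t is_line_shear_image by unfold_locales auto
  have "card (shear t ` P) = card P"
    by (rule card_image) (rule inj_on_subset[OF inj_shear], simp)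
  moreover have "card ((`) (shear t) ` L) = card L"
    by (rule card_image) (simp add: inj_on_def inj_image_eq_iff[OF inj_shear])
  ultimately show ?thesis
    using sheared.szemeredi_trotter_distinct_abscissae card_incidences_image[OF inj_shear] by simp
qed

section \<open>Solving for the number of points\<close>

lemma szemeredi_trotter_dichotomy:
  fixes I I0 L0 Lc Pc :: real
  assumes "0 \<le> Pc" "0 \<le> Lc" "Lc \<le> L0" "4 * L0 \<le> I0" "I0 \<le> I"
    and "I \<le> Lc + 8 * Pc + root 3 (128 * Pc ^ 2 * Lc ^ 2)"
  shows "3 * I0 \<le> 64 * Pc \<or> 27 * I0 ^ 3 \<le> 65536 * Pc ^ 2 * L0 ^ 2"
proof (cases "3 * I0 \<le> 64 * Pc")
  case False
  define R where "R = root 3 (128 * Pc ^ 2 * Lc ^ 2)"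
  have "3 * I0 / 8 \<le> R" "0 \<le> 3 * I0 / 8"
    using assms False unfolding R_def by linarith+
  then have "(3 * I0 / 8) ^ 3 \<le> R ^ 3" by (rule power_mono)
  also have "\<dots> = 128 * Pc ^ 2 * Lc ^ 2" unfolding R_def by simp
  also have "\<dots> \<le> 128 * Pc ^ 2 * L0 ^ 2"
    using assms(2,3) by (intro mult_left_mono power_mono) simp_all
  finally show ?thesis
    by (simp add: power_divide)
qed simp

lemma incidence_exponents_cube:
  fixes m n \<alpha> \<beta> :: real
  assumes "m > 0" "n > 0"
  shows "(m powr (\<alpha>/2 - 1/2) * n powr (\<beta>/2 + 1) * (m powr \<alpha> * n powr \<beta>)) ^ 2
       = (m powr (\<alpha> - 1/3) * n powr (\<beta> + 2/3)) ^ 3"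
proof -
  have "m powr (\<alpha>/2 - 1/2) * m powr \<alpha> = m powr (3/2 * \<alpha> - 1/2)"
    "n powr (\<beta>/2 + 1) * n powr \<beta> = n powr (3/2 * \<beta> + 1)"
    by (simp_all add: powr_add[symmetric])
  moreover have "m powr (\<alpha>/2 - 1/2) * n powr (\<beta>/2 + 1) * (m powr \<alpha> * n powr \<beta>)
      = (m powr (\<alpha>/2 - 1/2) * m powr \<alpha>) * (n powr (\<beta>/2 + 1) * n powr \<beta>)"
    by (simp only: mult_ac)
  ultimately have "m powr (\<alpha>/2 - 1/2) * n powr (\<beta>/2 + 1) * (m powr \<alpha> * n powr \<beta>)
      = m powr (3/2 * \<alpha> - 1/2) * n powr (3/2 * \<beta> + 1)"
    by simp
  then show ?thesis
    using assms by (simp add: power_mult_distrib powr_power algebra_simps)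
qed

lemma incidence_lines_term_le:
  fixes m n \<alpha> \<beta> A B :: real
  assumes "A > 0" "B > 0" "m > 0" "n > 0" "(4 * A / B) ^ 3 * m \<le> n ^ 2"
  shows "4 * (A * m powr \<alpha> * n powr \<beta>) \<le> B * m powr (\<alpha> - 1/3) * n powr (\<beta> + 2/3)"
proof -
  have "(4 * A * m powr (1/3)) ^ 3 = (4 * A / B) ^ 3 * m * B ^ 3"
    using assms by (simp add: power_mult_distrib powr_power power_divide)
  also have "\<dots> \<le> n ^ 2 * B ^ 3"
    using assms by (intro mult_right_mono) simp_all
  also have "\<dots> = (B * n powr (2/3)) ^ 3"
    using assms by (simp add: power_mult_distrib powr_power powr_numeral)
  finally have "4 * A * m powr (1/3) \<le> B * n powr (2/3)"
    by (rule power_le_imp_le_base[where n = 2, simplified]) (use assms in simp)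
  then have mono: "4 * A * m powr (1/3) * (m powr (\<alpha> - 1/3) * n powr \<beta>)
      \<le> B * n powr (2/3) * (m powr (\<alpha> - 1/3) * n powr \<beta>)"
    by (rule mult_right_mono) simp
  have m_split: "m powr \<alpha> = m powr (1/3) * m powr (\<alpha> - 1/3)"
    and n_split: "n powr (\<beta> + 2/3) = n powr (2/3) * n powr \<beta>"
    by (simp_all add: powr_add[symmetric] add.commute)
  show ?thesis
    using mono unfolding m_split n_split by (simp only: mult_ac)
qed

lemma incidence_points_term_le:
  fixes m n \<alpha> \<beta> :: real
  assumes "\<alpha> + 2 * \<beta> = 1" "\<beta> \<le> 2/3" "m > 0" "n > 0" "n \<le> m ^ 2"
  shows "m powr (\<alpha>/2 - 1/2) * n powr (\<beta>/2 + 1) \<le> m powr (\<alpha> - 1/3) * n powr (\<beta> + 2/3)"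
proof -
  define t where "t = 1/3 - \<beta>/2"
  have exponents: "\<alpha>/2 - 1/2 + 2 * t = \<alpha> - 1/3" "\<beta>/2 + 1 + - t = \<beta> + 2/3"
    using assms(1) unfolding t_def by simp_all
  have "1 \<le> (m ^ 2 / n) powr t"
    using assms unfolding t_def by (intro ge_one_powr_ge_zero) simp_all
  then have "m powr (\<alpha>/2 - 1/2) * n powr (\<beta>/2 + 1)
      \<le> m powr (\<alpha>/2 - 1/2) * n powr (\<beta>/2 + 1) * (m ^ 2 / n) powr t"
    using assms by simp
  also have "(m ^ 2 / n) powr t = (m powr 2) powr t / n powr t"
    using assms by (simp add: powr_divide powr_numeral)
  also have "\<dots> = m powr (2 * t) * n powr (- t)"
    by (simp add: powr_powr powr_minus_divide)
  also have "m powr (\<alpha>/2 - 1/2) * n powr (\<beta>/2 + 1) * (m powr (2 * t) * n powr (- t))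
      = m powr (\<alpha>/2 - 1/2 + 2 * t) * n powr (\<beta>/2 + 1 + - t)"
    unfolding powr_add by (simp only: mult_ac)
  finally show ?thesis by (simp only: exponents)
qed

lemma points_lower_bound:
  fixes \<alpha> \<beta> A B m n I Lc Pc :: real
  assumes ab: "\<alpha> + 2 * \<beta> = 1" "\<beta> \<le> 2/3" and AB: "A > 0" "B > 0" and mn: "m > 0" "n > 0"
    and balanced: "(4 * A / B) ^ 3 * m \<le> n ^ 2" "n \<le> m ^ 2"
    and counts: "0 \<le> Pc" "0 \<le> Lc" "Lc \<le> A * m powr \<alpha> * n powr \<beta>"
    and incidences: "B * m powr (\<alpha> - 1/3) * n powr (\<beta> + 2/3) \<le> I"
      "I \<le> Lc + 8 * Pc + root 3 (128 * Pc ^ 2 * Lc ^ 2)"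
  shows "min (3 * B / 64) (sqrt (27 * B ^ 3 / (65536 * A ^ 2))) * (m powr (\<alpha>/2 - 1/2) * n powr (\<beta>/2 + 1))
    \<le> Pc"
proof -
  define P0 where "P0 = m powr (\<alpha>/2 - 1/2) * n powr (\<beta>/2 + 1)"
  define K where "K = m powr \<alpha> * n powr \<beta>"
  define X where "X = m powr (\<alpha> - 1/3) * n powr (\<beta> + 2/3)"
  have pos: "P0 > 0" "K > 0" using mn unfolding P0_def K_def by simp_all
  have "4 * (A * K) \<le> B * X"
    using incidence_lines_term_le[OF AB mn balanced(1)] unfolding K_def X_def by (simp add: mult_ac)
  then consider "3 * (B * X) \<le> 64 * Pc" | "27 * (B * X) ^ 3 \<le> 65536 * Pc ^ 2 * (A * K) ^ 2"
    using szemeredi_trotter_dichotomy[OF counts(1,2) _ _ _ incidences(2), of "A * K" "B * X"]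
      counts(3) incidences(1) unfolding K_def X_def by (auto simp: mult_ac)
  then show ?thesis
  proof cases
    case 1
    have "P0 \<le> X" using incidence_points_term_le[OF ab mn balanced(2)] unfolding P0_def X_def .
    then have "3 * B * P0 \<le> 3 * B * X" using AB by simp
    then have "3 * B / 64 * P0 \<le> Pc" using 1 by simp
    then show ?thesis
      using pos unfolding P0_def by (meson min.cobounded1 mult_right_mono order_trans less_imp_le)
  next
    case 2
    have "X ^ 3 = (P0 * K) ^ 2"
      using incidence_exponents_cube[OF mn] unfolding P0_def K_def X_def by simp
    then have "(27 * B ^ 3 * P0 ^ 2) * K ^ 2 \<le> (65536 * A ^ 2 * Pc ^ 2) * K ^ 2"
      using 2 by (simp add: power_mult_distrib mult_ac)
    then have "27 * B ^ 3 * P0 ^ 2 \<le> 65536 * A ^ 2 * Pc ^ 2"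
      using pos by simp
    define \<kappa> where "\<kappa> = 27 * B ^ 3 / (65536 * A ^ 2)"
    have "\<kappa> * P0 ^ 2 \<le> Pc ^ 2"
      using \<open>27 * B ^ 3 * P0 ^ 2 \<le> 65536 * A ^ 2 * Pc ^ 2\<close> AB unfolding \<kappa>_def
      by (simp add: field_simps)
    then have "sqrt (\<kappa> * P0 ^ 2) \<le> sqrt (Pc ^ 2)"
      by (rule real_sqrt_le_mono)
    moreover have "sqrt (\<kappa> * P0 ^ 2) = sqrt \<kappa> * P0"
      using pos by (simp add: real_sqrt_mult)
    ultimately have "sqrt \<kappa> * P0 \<le> Pc"
      using counts(1) by simp
    then show ?thesis
      using pos unfolding P0_def \<kappa>_def by (meson min.cobounded2 mult_right_mono order_trans less_imp_le)
  qed
qed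

theorem proposition2p9:
  fixes \<alpha> \<beta> A B :: real
  assumes "\<alpha> + 2 * \<beta> = 1" and "\<beta> \<le> 2 / 3" and "A > 0" and "B > 0"
  shows "\<exists>C\<^sub>1 > 0. \<exists>c > 0. \<forall>(m::nat) (n::nat) (P::(real \<times> real) set) (L::(real \<times> real) set set).
           m > 0 \<longrightarrow> n > 0 \<longrightarrow>
           real m \<le> real n ^ 2 / C\<^sub>1 \<longrightarrow> real n \<le> real m ^ 2 / C\<^sub>1 \<longrightarrow>
           finite P \<longrightarrow> finite L \<longrightarrow> (\<forall>l\<in>L. is_line l) \<longrightarrow>
           real (card L) \<le> A * real m powr \<alpha> * real n powr \<beta> \<longrightarrow>
           real (card (incidences P L)) \<ge> B * real m powr (\<alpha> - 1/3) * real n powr (\<beta> + 2/3) \<longrightarrow>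
           real (card P) \<ge> c * real m powr (\<alpha>/2 - 1/2) * real n powr (\<beta>/2 + 1)"
proof -
  define C\<^sub>1 where "C\<^sub>1 = max 1 ((4 * A / B) ^ 3)"
  define c where "c = min (3 * B / 64) (sqrt (27 * B ^ 3 / (65536 * A ^ 2)))"
  show ?thesis
  proof (rule exI[of _ C\<^sub>1], intro conjI exI[of _ c] allI impI)
    show "C\<^sub>1 > 0" "c > 0" using assms(3,4) unfolding C\<^sub>1_def c_def by auto
    fix m n :: nat and P :: "(real \<times> real) set" and L :: "(real \<times> real) set set"
    assume mn: "m > 0" "n > 0" "real m \<le> real n ^ 2 / C\<^sub>1" "real n \<le> real m ^ 2 / C\<^sub>1"
      and PL: "finite P" "finite L" "\<forall>l\<in>L. is_line l"
      and counts: "real (card L) \<le> A * real m powr \<alpha> * real n powr \<beta>"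
        "real (card (incidences P L)) \<ge> B * real m powr (\<alpha> - 1/3) * real n powr (\<beta> + 2/3)"
    have "(4 * A / B) ^ 3 * real m \<le> C\<^sub>1 * real m" "1 * real n \<le> C\<^sub>1 * real n"
      unfolding C\<^sub>1_def by (intro mult_right_mono; simp)+
    moreover have "C\<^sub>1 * real m \<le> real n ^ 2" "C\<^sub>1 * real n \<le> real m ^ 2"
      using mn(3,4) \<open>C\<^sub>1 > 0\<close> by (simp_all add: field_simps)
    ultimately have balanced: "(4 * A / B) ^ 3 * real m \<le> real n ^ 2" "real n \<le> real m ^ 2"
      by linarith+
    have "c * (real m powr (\<alpha>/2 - 1/2) * real n powr (\<beta>/2 + 1)) \<le> real (card P)"
      unfolding c_def
      by (rule points_lower_bound[OF assms _ _ balanced _ _ counts szemeredi_trotter[OF PL]])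
        (use mn in simp_all)
    then show "real (card P) \<ge> c * real m powr (\<alpha>/2 - 1/2) * real n powr (\<beta>/2 + 1)"
      by (simp add: mult.assoc)
  qed
qed

end
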